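(* For any $c\in(0,1)$, the manifolds $\mathscr{L}_c$ and $\mathrm{Aut}(\mathbb{D})/_c\mathbb{Z}_2$ are both diffeomorphic to $\mathrm{Aut}(\mathbb{D})/_0\mathbb{Z}_2$.
   Context: $\mathbb{D}$ is the open unit disc and $\mathrm{Aut}(\mathbb{D})$ its holomorphic automorphism group, a smooth real $3$-manifold via the parametrization $\varphi_{\theta,\alpha}(z)=e^{i\theta}\frac{z-\alpha}{1-\overline{\alpha}z}$, $(\theta,\alpha)\in\mathbb{R}\times\mathbb{D}$ (charts $\theta\in(-\pi,\pi)$ and $\theta\in(0,2\pi)$). $\mathbb{G}=\{(z_1+z_2,z_1z_2):z_1,z_2\in\mathbb{D}\}$, and for $c\in(0,1)$, $\mathscr{L}_c=\{(z_1+z_2,z_1z_2): z_1,z_2\in\mathbb{D},\ |\frac{z_1-z_2}{1-\overline{z_1}z_2}|=c\}$, a real $3$-dimensional submanifold of $\mathbb{G}$. For $c\in(0,1)$, $\mathrm{Aut}(\mathbb{D})/_c\mathbb{Z}_2$ denotes the quotient manifold of $\mathrm{Aut}(\mathbb{D})$ by the free properly discontinuous $\mathbb{Z}_2=\{\pm1\}$-action $(-1)\cdot\varphi=\varphi\circ\varphi_c$, where $\varphi_c(z)=\frac{c-z}{1-cz}$; $\mathrm{Aut}(\mathbb{D})/_0\mathbb{Z}_2$ denotes the quotient by the free properly discontinuous action $(-1)\cdot\varphi=\varphi\circ(-\mathrm{id})$, i.e. $((-1)\cdot\varphi)(z)=\varphi(-z)$. *)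

theory Defs
  imports "HOL-Analysis.Analysis" "HOL-Library.FuncSet"
begin

text \<open>A real-valued function is C-infinity on U if it is continuous on U and,
  for every basis direction, the directional (partial) derivative exists on U
  and is again C-infinity on U (greatest fixed point: partials of all orders
  exist and are continuous).\<close>
coinductive smooth_fun :: "'a::euclidean_space set \<Rightarrow> ('a \<Rightarrow> real) \<Rightarrow> bool"
  for U :: "'a set" where
  "continuous_on U g \<Longrightarrow>
   (\<forall>b\<in>Basis. \<exists>h. (\<forall>x\<in>U. ((\<lambda>t. g (x + t *\<^sub>R b)) has_real_derivative h x) (at 0))
                  \<and> smooth_fun U h)
   \<Longrightarrow> smooth_fun U g"

definition smooth_on :: "'a::euclidean_space set \<Rightarrow> ('a \<Rightarrow> 'b::euclidean_space) \<Rightarrow> bool" where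
  "smooth_on U f \<longleftrightarrow> open U \<and> (\<forall>b\<in>Basis. smooth_fun U (\<lambda>x. f x \<bullet> b))"

definition smooth_map :: "'a::euclidean_space set \<Rightarrow> 'b::euclidean_space set \<Rightarrow> ('a \<Rightarrow> 'b) \<Rightarrow> bool" where
  "smooth_map S T f \<longleftrightarrow> f ` S \<subseteq> T \<and>
     (\<forall>x\<in>S. \<exists>U g. open U \<and> x \<in> U \<and> smooth_on U g \<and> (\<forall>y\<in>S \<inter> U. g y = f y))"

definition qcls :: "('a \<Rightarrow> 'a) \<Rightarrow> 'a \<Rightarrow> 'a set" where
  "qcls \<sigma> x = {x, \<sigma> x}"

definition quot :: "'a set \<Rightarrow> ('a \<Rightarrow> 'a) \<Rightarrow> 'a set set" where
  "quot M \<sigma> = qcls \<sigma> ` M"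

text \<open>A map into the quotient manifold M/sigma is smooth iff it locally lifts to a
  smooth map into M (the projection is a local diffeomorphism).\<close>
definition smooth_to_quot ::
  "'a::euclidean_space set \<Rightarrow> 'b::euclidean_space set \<Rightarrow> ('b \<Rightarrow> 'b) \<Rightarrow> ('a \<Rightarrow> 'b set) \<Rightarrow> bool" where
  "smooth_to_quot S M \<sigma> F \<longleftrightarrow> (\<forall>x\<in>S. F x \<in> quot M \<sigma>) \<and>
     (\<forall>x\<in>S. \<exists>U g. open U \<and> x \<in> U \<and> smooth_map (S \<inter> U) M g \<and>
                    (\<forall>y\<in>S \<inter> U. F y = qcls \<sigma> (g y)))"

definition diffeo_sub_quot ::
  "'a::euclidean_space set \<Rightarrow> 'b::euclidean_space set \<Rightarrow> ('b \<Rightarrow> 'b) \<Rightarrow> bool" where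
  "diffeo_sub_quot S M \<sigma> \<longleftrightarrow> (\<exists>F G.
     (\<forall>x\<in>S. F x \<in> quot M \<sigma>) \<and> (\<forall>p\<in>quot M \<sigma>. G p \<in> S) \<and>
     (\<forall>x\<in>S. G (F x) = x) \<and> (\<forall>p\<in>quot M \<sigma>. F (G p) = p) \<and>
     smooth_to_quot S M \<sigma> F \<and> smooth_map M S (G \<circ> qcls \<sigma>))"

definition diffeo_quot_quot ::
  "'a::euclidean_space set \<Rightarrow> ('a \<Rightarrow> 'a) \<Rightarrow> 'b::euclidean_space set \<Rightarrow> ('b \<Rightarrow> 'b) \<Rightarrow> bool" where
  "diffeo_quot_quot M \<sigma> N \<tau> \<longleftrightarrow> (\<exists>F G.
     (\<forall>p\<in>quot M \<sigma>. F p \<in> quot N \<tau>) \<and> (\<forall>q\<in>quot N \<tau>. G q \<in> quot M \<sigma>) \<and>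
     (\<forall>p\<in>quot M \<sigma>. G (F p) = p) \<and> (\<forall>q\<in>quot N \<tau>. F (G q) = q) \<and>
     smooth_to_quot M N \<tau> (F \<circ> qcls \<sigma>) \<and> smooth_to_quot N M \<sigma> (G \<circ> qcls \<tau>))"

definition disc :: "complex set" where
  "disc = ball 0 1"

text \<open>Aut(D) is parametrised by (u, alpha) with u = exp(i theta) on the unit
  circle and alpha in the disc; as a manifold it is the embedded submanifold
  S^1 x D of C x C (equivalently the charts theta in (-pi,pi), (0,2pi)).\<close>
definition AutP :: "(complex \<times> complex) set" where
  "AutP = {(u, a). cmod u = 1 \<and> a \<in> disc}"

definition autf :: "complex \<times> complex \<Rightarrow> complex \<Rightarrow> complex" where
  "autf p = restrict (\<lambda>z. fst p * (z - snd p) / (1 - cnj (snd p) * z)) disc"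

definition phic :: "real \<Rightarrow> complex \<Rightarrow> complex" where
  "phic c z = (complex_of_real c - z) / (1 - complex_of_real c * z)"

definition act_c :: "real \<Rightarrow> complex \<times> complex \<Rightarrow> complex \<times> complex" where
  "act_c c p = (THE q. q \<in> AutP \<and> autf q = restrict (autf p \<circ> phic c) disc)"

definition act_0 :: "complex \<times> complex \<Rightarrow> complex \<times> complex" where
  "act_0 p = (THE q. q \<in> AutP \<and> autf q = restrict (\<lambda>z. autf p (- z)) disc)"

definition Lset :: "real \<Rightarrow> (complex \<times> complex) set" where
  "Lset c = {(z1 + z2, z1 * z2) | z1 z2. z1 \<in> disc \<and> z2 \<in> disc \<and>
              cmod ((z1 - z2) / (1 - cnj z1 * z2)) = c}"

end

theory Submission
  imports Defs "HOL-Complex_Analysis.Cauchy_Integral_Formula"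
begin

text \<open>Let t be the point of (0,1) whose pseudo-hyperbolic distance to -t is c. Moebius maps
  preserve this distance, so phi maps to (phi(t) + phi(-t), phi(t) phi(-t)) sends Aut(D) into L_c;
  the map is onto because Aut(D) acts transitively on pairs of points at a given distance, and two
  automorphisms have the same image iff they agree on {t, -t} up to the swap, i.e. iff they differ
  by -id on the right. The quadratic formula gives smooth local inverses, so the map induces a
  diffeomorphism from Aut(D)/_0 Z2 onto L_c.

  For the second statement, phi_c is conjugate to -id: phi_c o psi = psi o (-id) for
  psi(z) = (z + t)/(1 + t z), so right composition with psi intertwines the two Z2-actions.

  Smoothness is checked through a class of complex functions closed under ring operations,
  conjugation and composition with holomorphic functions. By the chain rule this class is closed
  under directional derivatives, so the real and imaginary parts of its members are C-infinity.\<close>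

section \<open>A sufficient criterion for smoothness\<close>

inductive_set smooth_cfun :: "'a::euclidean_space set \<Rightarrow> ('a \<Rightarrow> complex) set" for U
where
  const: "(\<lambda>x. k) \<in> smooth_cfun U"
| inner: "(\<lambda>x. complex_of_real (x \<bullet> v)) \<in> smooth_cfun U"
| add: "f \<in> smooth_cfun U \<Longrightarrow> g \<in> smooth_cfun U \<Longrightarrow> (\<lambda>x. f x + g x) \<in> smooth_cfun U"
| mult: "f \<in> smooth_cfun U \<Longrightarrow> g \<in> smooth_cfun U \<Longrightarrow> (\<lambda>x. f x * g x) \<in> smooth_cfun U"
| cnj: "f \<in> smooth_cfun U \<Longrightarrow> (\<lambda>x. cnj (f x)) \<in> smooth_cfun U"
| holomorphic: "f \<in> smooth_cfun U \<Longrightarrow> g holomorphic_on S \<Longrightarrow> open S \<Longrightarrow> f ` U \<subseteq> S \<Longrightarrow>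
    (\<lambda>x. g (f x)) \<in> smooth_cfun U"

lemma smooth_cfun_mono: "f \<in> smooth_cfun U \<Longrightarrow> V \<subseteq> U \<Longrightarrow> f \<in> smooth_cfun V"
  by (induction rule: smooth_cfun.induct) (auto intro: smooth_cfun.intros)

lemma smooth_cfun_minus: "f \<in> smooth_cfun U \<Longrightarrow> (\<lambda>x. - f x) \<in> smooth_cfun U"
  using smooth_cfun.mult[OF smooth_cfun.const[of "-1"]] by simp

lemma smooth_cfun_diff: "f \<in> smooth_cfun U \<Longrightarrow> g \<in> smooth_cfun U \<Longrightarrow> (\<lambda>x. f x - g x) \<in> smooth_cfun U"
  using smooth_cfun.add[OF _ smooth_cfun_minus] by simp

lemma smooth_cfun_inverse:
  assumes "f \<in> smooth_cfun U" "\<forall>x\<in>U. f x \<noteq> 0"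
  shows "(\<lambda>x. inverse (f x)) \<in> smooth_cfun U"
  using assms
  by (auto intro!: smooth_cfun.holomorphic[where S="- {0}", OF assms(1)] holomorphic_intros)

lemma smooth_cfun_divide:
  assumes "f \<in> smooth_cfun U" "g \<in> smooth_cfun U" "\<forall>x\<in>U. g x \<noteq> 0"
  shows "(\<lambda>x. f x / g x) \<in> smooth_cfun U"
  using smooth_cfun.mult[OF assms(1) smooth_cfun_inverse[OF assms(2,3)]]
  by (simp add: divide_inverse)

lemma smooth_cfun_csqrt:
  assumes "f \<in> smooth_cfun U" "\<forall>x\<in>U. 0 < Re (f x)"
  shows "(\<lambda>x. csqrt (f x)) \<in> smooth_cfun U"
proof (rule smooth_cfun.holomorphic[OF assms(1)])
  show "csqrt holomorphic_on {z. 0 < Re z}"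
    by (rule holomorphic_on_subset[OF holomorphic_on_csqrt]) (auto elim: nonpos_Reals_cases)
qed (use assms(2) open_halfspace_Re_gt[of 0] in auto)

lemma smooth_cfun_fst: "fst \<in> smooth_cfun U"
proof -
  have "fst = (\<lambda>x. complex_of_real (x \<bullet> (1, 0)) + \<i> * complex_of_real (x \<bullet> (\<i>, 0)))"
    by (auto simp: inner_prod_def complex_eq_iff)
  also have "\<dots> \<in> smooth_cfun U"
    by (intro smooth_cfun.intros)
  finally show ?thesis .
qed

lemma smooth_cfun_snd: "snd \<in> smooth_cfun U"
proof -
  have "snd = (\<lambda>x. complex_of_real (x \<bullet> (0, 1)) + \<i> * complex_of_real (x \<bullet> (0, \<i>)))"
    by (auto simp: inner_prod_def complex_eq_iff)
  also have "\<dots> \<in> smooth_cfun U"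
    by (intro smooth_cfun.intros)
  finally show ?thesis .
qed

lemma smooth_cfun_isCont:
  assumes "open U" "f \<in> smooth_cfun U" "x \<in> U"
  shows "isCont f x"
  using assms(2,3)
proof (induction arbitrary: x rule: smooth_cfun.induct)
  case (holomorphic f g S)
  then have "isCont g (f x)"
    using holomorphic_on_imp_continuous_on continuous_on_eq_continuous_at by blast
  with holomorphic show ?case by (auto intro: isCont_o2)
qed (auto intro!: continuous_intros)

lemma smooth_cfun_continuous_on: "open U \<Longrightarrow> f \<in> smooth_cfun U \<Longrightarrow> continuous_on U f"
  by (simp add: continuous_at_imp_continuous_on smooth_cfun_isCont)

lemma open_smooth_cfun_nonzero:
  assumes "open U" "f \<in> smooth_cfun U"
  shows "open {y \<in> U. f y \<noteq> 0}"
proof -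
  have "open (U \<inter> f -` (- {0}))"
    using assms by (intro continuous_open_preimage smooth_cfun_continuous_on) auto
  moreover have "U \<inter> f -` (- {0}) = {y \<in> U. f y \<noteq> 0}"
    by auto
  ultimately show ?thesis by simp
qed

lemma smooth_cfun_directional_derivative:
  assumes "open U" "f \<in> smooth_cfun U"
  shows "\<exists>f'\<in>smooth_cfun U. \<forall>x\<in>U. ((\<lambda>t. f (x + t *\<^sub>R b)) has_vector_derivative f' x) (at 0)"
  using assms(2)
proof (induction rule: smooth_cfun.induct)
  case (const k)
  show ?case
    by (intro bexI[of _ "\<lambda>x. 0"] smooth_cfun.const) (auto intro: derivative_eq_intros)
next
  case (inner v)
  have "((\<lambda>t. complex_of_real ((x + t *\<^sub>R b) \<bullet> v))
      has_vector_derivative complex_of_real (b \<bullet> v)) (at 0)" for x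
    unfolding inner_add_left inner_scaleR_left
    by (intro has_vector_derivative_of_real) (auto intro!: derivative_eq_intros)
  then show ?case
    by (intro bexI[OF _ smooth_cfun.const]) auto
next
  case (add f g)
  then obtain f' g' where
    "f' \<in> smooth_cfun U" "\<forall>x\<in>U. ((\<lambda>t. f (x + t *\<^sub>R b)) has_vector_derivative f' x) (at 0)"
    "g' \<in> smooth_cfun U" "\<forall>x\<in>U. ((\<lambda>t. g (x + t *\<^sub>R b)) has_vector_derivative g' x) (at 0)"
    by blast
  then show ?case
    by (intro bexI[of _ "\<lambda>x. f' x + g' x"] smooth_cfun.add) (auto intro: has_vector_derivative_add)
next
  case (mult f g)
  then obtain f' g' where
    f': "f' \<in> smooth_cfun U" "\<forall>x\<in>U. ((\<lambda>t. f (x + t *\<^sub>R b)) has_vector_derivative f' x) (at 0)"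
    and g': "g' \<in> smooth_cfun U" "\<forall>x\<in>U. ((\<lambda>t. g (x + t *\<^sub>R b)) has_vector_derivative g' x) (at 0)"
    by blast
  have "\<forall>x\<in>U. ((\<lambda>t. f (x + t *\<^sub>R b) * g (x + t *\<^sub>R b))
      has_vector_derivative f x * g' x + f' x * g x) (at 0)"
    using f'(2) g'(2) has_vector_derivative_mult[of "\<lambda>t. f (_ + t *\<^sub>R b)"] by fastforce
  moreover have "(\<lambda>x. f x * g' x + f' x * g x) \<in> smooth_cfun U"
    by (rule smooth_cfun.add[OF smooth_cfun.mult[OF mult.hyps(1) g'(1)] smooth_cfun.mult[OF f'(1) mult.hyps(2)]])
  ultimately show ?case
    by (rule bexI[of _ "\<lambda>x. f x * g' x + f' x * g x"])
next
  case (cnj f)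
  then obtain f' where
    "f' \<in> smooth_cfun U" "\<forall>x\<in>U. ((\<lambda>t. f (x + t *\<^sub>R b)) has_vector_derivative f' x) (at 0)"
    by blast
  then show ?case
    by (intro bexI[of _ "\<lambda>x. cnj (f' x)"] smooth_cfun.cnj) (auto intro: has_vector_derivative_cnj)
next
  case (holomorphic f g S)
  then obtain f' where
    f': "f' \<in> smooth_cfun U" "\<forall>x\<in>U. ((\<lambda>t. f (x + t *\<^sub>R b)) has_vector_derivative f' x) (at 0)"
    by blast
  have "\<forall>x\<in>U. ((\<lambda>t. g (f (x + t *\<^sub>R b))) has_vector_derivative f' x * deriv g (f x)) (at 0)"
  proof
    fix x assume "x \<in> U"
    then have "(g has_field_derivative deriv g (f x)) (at (f x))"
      using holomorphic.hyps by (intro holomorphic_derivI) auto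
    then show "((\<lambda>t. g (f (x + t *\<^sub>R b))) has_vector_derivative f' x * deriv g (f x)) (at 0)"
      using field_vector_diff_chain_at[OF f'(2)[rule_format, OF \<open>x \<in> U\<close>]] by (simp add: o_def)
  qed
  moreover have "(\<lambda>x. f' x * deriv g (f x)) \<in> smooth_cfun U"
    using holomorphic.hyps
    by (intro smooth_cfun.mult[OF f'(1)] smooth_cfun.holomorphic[OF holomorphic.hyps(1)] holomorphic_deriv)
  ultimately show ?case
    by (rule bexI[of _ "\<lambda>x. f' x * deriv g (f x)"])
qed

lemma smooth_fun_Re_smooth_cfun:
  assumes "open U" "f \<in> smooth_cfun U"
  shows "smooth_fun U (\<lambda>x. Re (f x))"
  using assms(2)
proof (coinduction arbitrary: f rule: smooth_fun.coinduct)
  case (smooth_fun f)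
  have "continuous_on U (\<lambda>x. Re (f x))"
    using smooth_cfun_continuous_on[OF assms(1) smooth_fun] by (intro continuous_intros)
  moreover have "\<exists>h. (\<forall>x\<in>U. ((\<lambda>t. Re (f (x + t *\<^sub>R b))) has_real_derivative h x) (at 0)) \<and>
      ((\<exists>f'. h = (\<lambda>x. Re (f' x)) \<and> f' \<in> smooth_cfun U) \<or> smooth_fun U h)" for b
  proof -
    obtain f' where "f' \<in> smooth_cfun U" "\<forall>x\<in>U. ((\<lambda>t. f (x + t *\<^sub>R b)) has_vector_derivative f' x) (at 0)"
      using smooth_cfun_directional_derivative[OF assms(1) smooth_fun] by blast
    then show ?thesis by (intro exI[of _ "\<lambda>x. Re (f' x)"]) (auto intro: has_field_derivative_Re)
  qed
  ultimately show ?case by blast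
qed

definition smooth_cpair :: "'a::euclidean_space set \<Rightarrow> ('a \<Rightarrow> complex \<times> complex) \<Rightarrow> bool" where
  "smooth_cpair U P \<longleftrightarrow> (\<lambda>x. fst (P x)) \<in> smooth_cfun U \<and> (\<lambda>x. snd (P x)) \<in> smooth_cfun U"

lemma smooth_cpair_Pair [simp]:
  "smooth_cpair U (\<lambda>x. (f x, g x)) \<longleftrightarrow> f \<in> smooth_cfun U \<and> g \<in> smooth_cfun U"
  by (simp add: smooth_cpair_def)

lemma smooth_cpair_id: "smooth_cpair U (\<lambda>x. x)"
  by (simp add: smooth_cpair_def smooth_cfun_fst smooth_cfun_snd)

lemma smooth_cpair_const: "smooth_cpair U (\<lambda>x. q)"
  by (simp add: smooth_cpair_def smooth_cfun.const)

lemma smooth_on_smooth_cpair: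
  assumes "open U" "smooth_cpair U g"
  shows "smooth_on U g"
  unfolding smooth_on_def
proof (intro conjI assms(1) ballI)
  have Re_Im: "smooth_fun U (\<lambda>x. Re (h x))" "smooth_fun U (\<lambda>x. Im (h x))" if "h \<in> smooth_cfun U" for h
    using smooth_fun_Re_smooth_cfun[OF assms(1) that]
      smooth_fun_Re_smooth_cfun[OF assms(1) smooth_cfun.mult[OF smooth_cfun.const[of "- \<i>"] that]]
    by simp_all
  fix b :: "complex \<times> complex" assume "b \<in> Basis"
  then have "b \<in> {(1, 0), (\<i>, 0), (0, 1), (0, \<i>)}"
    unfolding Basis_prod_def Basis_complex_def by auto
  then show "smooth_fun U (\<lambda>x. g x \<bullet> b)"
    using assms(2) Re_Im unfolding smooth_cpair_def
    by (elim insertE emptyE) (simp_all add: inner_prod_def)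
qed

section \<open>Quotients by involutions\<close>

lemma quot_iff: "P \<in> quot M \<sigma> \<longleftrightarrow> (\<exists>p\<in>M. P = qcls \<sigma> p)"
  by (auto simp: quot_def)

lemma diffeo_quot_quot_intertwining:
  assumes \<sigma>: "\<forall>p\<in>M. \<sigma> p \<in> M"
    and R: "smooth_map M N R" and R': "smooth_map N M R'"
    and R'_R: "\<forall>p\<in>M. R' (R p) = p" and R_R': "\<forall>q\<in>N. R (R' q) = q"
    and intertwine: "\<forall>p\<in>M. R (\<sigma> p) = \<tau> (R p)"
  shows "diffeo_quot_quot M \<sigma> N \<tau>"
proof -
  have RM: "R p \<in> N" if "p \<in> M" for p
    using R that by (auto simp: smooth_map_def)
  have R'N: "R' q \<in> M" if "q \<in> N" for q
    using R' that by (auto simp: smooth_map_def)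
  have image_R: "R ` qcls \<sigma> p = qcls \<tau> (R p)" if "p \<in> M" for p
    using intertwine that by (simp add: qcls_def)
  have image_R': "R' ` qcls \<tau> q = qcls \<sigma> (R' q)" if "q \<in> N" for q
  proof -
    have "R' (\<tau> q) = R' (R (\<sigma> (R' q)))"
      using intertwine R_R' R'N that by metis
    also have "\<dots> = \<sigma> (R' q)"
      using R'_R \<sigma> R'N that by blast
    finally show ?thesis
      by (simp add: qcls_def)
  qed
  have "smooth_to_quot M N \<tau> ((\<lambda>P. R ` P) \<circ> qcls \<sigma>)"
    unfolding smooth_to_quot_def quot_iff using R RM image_R
    by (intro conjI ballI exI[of _ UNIV] exI[of _ R]) auto
  moreover have "smooth_to_quot N M \<sigma> ((\<lambda>Q. R' ` Q) \<circ> qcls \<tau>)"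
    unfolding smooth_to_quot_def quot_iff using R' R'N image_R'
    by (intro conjI ballI exI[of _ UNIV] exI[of _ R']) auto
  ultimately show ?thesis
    unfolding diffeo_quot_quot_def quot_def
    by (intro exI[of _ "\<lambda>P. R ` P"] exI[of _ "\<lambda>Q. R' ` Q"])
       (auto simp: image_R image_R' RM R'N R'_R R_R')
qed

lemma smooth_to_quot_of_local_sections:
  assumes same_orbit: "\<forall>p\<in>M. \<forall>q\<in>M. h p = h q \<longrightarrow> qcls \<sigma> q = qcls \<sigma> p"
    and lift: "\<forall>x\<in>S. lift x \<in> M \<and> h (lift x) = x"
    and local_section: "\<forall>x\<in>S. \<exists>U g. open U \<and> x \<in> U \<and> smooth_map (S \<inter> U) M g \<and>
      (\<forall>y\<in>S \<inter> U. h (g y) = y)"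
  shows "smooth_to_quot S M \<sigma> (\<lambda>x. qcls \<sigma> (lift x))"
  unfolding smooth_to_quot_def
proof (intro conjI ballI)
  fix x assume x: "x \<in> S"
  show "qcls \<sigma> (lift x) \<in> quot M \<sigma>"
    using lift x by (auto simp: quot_iff)
  obtain U g where U: "open U" "x \<in> U" and g: "smooth_map (S \<inter> U) M g"
    and hg: "\<forall>y\<in>S \<inter> U. h (g y) = y"
    using local_section x by blast
  have "qcls \<sigma> (lift y) = qcls \<sigma> (g y)" if "y \<in> S \<inter> U" for y
  proof -
    have "g y \<in> M"
      using g that by (auto simp: smooth_map_def)
    moreover have "lift y \<in> M" "h (g y) = h (lift y)"
      using hg lift that by auto
    ultimately show ?thesis
      using same_orbit by blast
  qed
  then show "\<exists>U g. open U \<and> x \<in> U \<and> smooth_map (S \<inter> U) M g \<and>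
      (\<forall>y\<in>S \<inter> U. qcls \<sigma> (lift y) = qcls \<sigma> (g y))"
    using U g by blast
qed

lemma diffeo_sub_quot_orbit_map:
  assumes \<sigma>: "\<forall>p\<in>M. \<sigma> (\<sigma> p) = p"
    and h: "smooth_map M S h"
    and invariant: "\<forall>p\<in>M. h (\<sigma> p) = h p"
    and fibres: "\<forall>p\<in>M. \<forall>q\<in>M. h p = h q \<longrightarrow> q = p \<or> q = \<sigma> p"
    and local_section: "\<forall>x\<in>S. \<exists>U g. open U \<and> x \<in> U \<and> smooth_map (S \<inter> U) M g \<and>
      (\<forall>y\<in>S \<inter> U. h (g y) = y)"
  shows "diffeo_sub_quot S M \<sigma>"
proof -
  define lift where "lift x = (SOME p. p \<in> M \<and> h p = x)" for x
  define G where "G P = h (SOME p. p \<in> P)" for P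
  have lift: "\<forall>x\<in>S. lift x \<in> M \<and> h (lift x) = x"
  proof
    fix x assume "x \<in> S"
    then have "\<exists>p. p \<in> M \<and> h p = x"
      using local_section by (metis IntI smooth_map_def image_subset_iff)
    then show "lift x \<in> M \<and> h (lift x) = x"
      unfolding lift_def by (rule someI_ex)
  qed
  have hM: "h p \<in> S" if "p \<in> M" for p
    using h that by (auto simp: smooth_map_def)
  have G: "G (qcls \<sigma> p) = h p" if "p \<in> M" for p
  proof -
    have "(SOME q. q \<in> qcls \<sigma> p) \<in> qcls \<sigma> p"
      by (rule someI[of _ p]) (simp add: qcls_def)
    then show ?thesis
      unfolding G_def using invariant that by (auto simp: qcls_def)
  qed
  have same_orbit: "\<forall>p\<in>M. \<forall>q\<in>M. h p = h q \<longrightarrow> qcls \<sigma> q = qcls \<sigma> p"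
    using fibres \<sigma> by (fastforce simp: qcls_def)
  have "qcls \<sigma> (lift (h p)) = qcls \<sigma> p" if "p \<in> M" for p
    using same_orbit lift hM that by metis
  moreover have "smooth_map M S (G \<circ> qcls \<sigma>)"
    using h G unfolding smooth_map_def by auto
  ultimately show ?thesis
    unfolding diffeo_sub_quot_def quot_def
    using smooth_to_quot_of_local_sections[OF same_orbit lift local_section]
    by (intro exI[of _ "\<lambda>x. qcls \<sigma> (lift x)"] exI[of _ G]) (auto simp: G lift hM)
qed

section \<open>The automorphism group of the disc in parameters\<close>

definition aut_map :: "complex \<times> complex \<Rightarrow> complex \<Rightarrow> complex" where
  "aut_map p z = fst p * (z - snd p) / (1 - cnj (snd p) * z)"

definition aut_comp_den :: "complex \<times> complex \<Rightarrow> complex \<times> complex \<Rightarrow> complex" where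
  "aut_comp_den p q = 1 + cnj (fst q) * snd p * cnj (snd q)"

definition aut_comp :: "complex \<times> complex \<Rightarrow> complex \<times> complex \<Rightarrow> complex \<times> complex" where
  "aut_comp p q = (fst p * fst q * aut_comp_den p q / cnj (aut_comp_den p q),
                   (snd q + cnj (fst q) * snd p) / aut_comp_den p q)"

definition aut_inv :: "complex \<times> complex \<Rightarrow> complex \<times> complex" where
  "aut_inv p = (cnj (fst p), - fst p * snd p)"

lemma AutP_iff: "p \<in> AutP \<longleftrightarrow> cmod (fst p) = 1 \<and> cmod (snd p) < 1"
  by (cases p) (simp add: AutP_def disc_def)

lemma norm_eq_1_mult_cnj: "cmod u = 1 \<Longrightarrow> u * cnj u = 1"
  using complex_norm_square[of u] by simp

lemma norm_mult_less_1: "cmod a < 1 \<Longrightarrow> cmod z < 1 \<Longrightarrow> cmod (a * z) < 1"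
  using mult_strict_mono[of "cmod a" 1 "cmod z" 1] by (simp add: norm_mult)

lemma one_minus_cnj_mult_nonzero: "cmod a < 1 \<Longrightarrow> cmod z < 1 \<Longrightarrow> 1 - cnj a * z \<noteq> 0"
  using norm_mult_less_1[of "cnj a" z] by auto

lemma norm_diff_less_norm_one_minus_cnj_mult:
  assumes "cmod a < 1" "cmod z < 1"
  shows "cmod (z - a) < cmod (1 - cnj a * z)"
proof -
  have "(cmod (1 - cnj a * z))\<^sup>2 - (cmod (z - a))\<^sup>2 = (1 - (cmod a)\<^sup>2) * (1 - (cmod z)\<^sup>2)"
    unfolding cmod_power2 by (simp add: power2_eq_square algebra_simps)
  moreover have "0 < (1 - (cmod a)\<^sup>2) * (1 - (cmod z)\<^sup>2)"
    using assms by (simp add: abs_square_less_1)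
  ultimately have "(cmod (z - a))\<^sup>2 < (cmod (1 - cnj a * z))\<^sup>2"
    by linarith
  then show ?thesis
    by (rule power_less_imp_less_base) simp
qed

lemma aut_map_in_disc:
  assumes "p \<in> AutP" "cmod z < 1"
  shows "cmod (aut_map p z) < 1"
  using assms norm_diff_less_norm_one_minus_cnj_mult[of "snd p" z]
  by (simp add: AutP_iff aut_map_def norm_mult norm_divide divide_less_eq_1)

lemma aut_comp_den_nonzero:
  assumes "cmod (snd p) < 1" "q \<in> AutP"
  shows "aut_comp_den p q \<noteq> 0"
proof -
  have "cmod (cnj (fst q) * snd p * cnj (snd q)) < 1"
    using norm_mult_less_1[of "snd p" "snd q"] assms by (simp add: AutP_iff norm_mult)
  then show ?thesis
    unfolding aut_comp_den_def by (metis add_eq_0_iff norm_minus_cancel norm_one less_irrefl)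
qed

lemma aut_map_aut_comp:
  assumes p: "p \<in> AutP" and q: "q \<in> AutP" and z: "cmod z < 1"
  shows "aut_map (aut_comp p q) z = aut_map p (aut_map q z)"
proof -
  obtain u a where p_eq: "p = (u, a)" by (cases p)
  obtain v b where q_eq: "q = (v, b)" by (cases q)
  have a: "cmod a < 1" and v: "v * cnj v = 1" and b: "cmod b < 1"
    using p q by (auto simp: p_eq q_eq AutP_iff norm_eq_1_mult_cnj)
  define d where "d = 1 - cnj b * z"
  define N where "N = (v + a * cnj b) * z - (v * b + a)"
  define M where "M = (1 + cnj a * v * b) - (cnj b + cnj a * v) * z"
  define D where "D = aut_comp_den p q"
  have d: "d \<noteq> 0"
    unfolding d_def using b z by (rule one_minus_cnj_mult_nonzero)
  have D: "D \<noteq> 0" and D_eq: "D = 1 + cnj v * a * cnj b"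
    using aut_comp_den_nonzero[of p q] p q by (auto simp: D_def aut_comp_den_def p_eq q_eq AutP_iff)
  have m: "aut_map q z = v * (z - b) / d"
    by (simp add: aut_map_def q_eq d_def)
  have num: "aut_map q z - a = N / d"
    unfolding m N_def using d by (simp add: field_simps d_def; simp add: algebra_simps)
  have den: "1 - cnj a * aut_map q z = M / d"
    unfolding m M_def using d by (simp add: field_simps d_def; simp add: algebra_simps)
  have M: "M \<noteq> 0"
    using one_minus_cnj_mult_nonzero[OF a aut_map_in_disc[OF q z]] den by auto
  have "aut_map p w = u * (w - a) / (1 - cnj a * w)" for w
    by (simp add: aut_map_def p_eq)
  then have "aut_map p (aut_map q z) = u * N / M"
    using d M by (simp add: num den)
  moreover have "aut_map (aut_comp p q) z = u * N / M"
  proof -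
    have Dc: "cnj D \<noteq> 0" "cnj D = 1 + v * cnj a * b"
      using D by (simp, simp add: D_eq)
    have comp: "aut_comp p q = (u * v * D / cnj D, (b + cnj v * a) / D)"
      by (simp add: aut_comp_def D_def p_eq q_eq)
    have num: "z - (b + cnj v * a) / D = (D * z - (b + cnj v * a)) / D"
      using D by (simp add: field_simps)
    have den: "1 - cnj ((b + cnj v * a) / D) * z = M / cnj D"
      unfolding M_def using Dc by (simp add: field_simps; simp add: algebra_simps)
    have "aut_map (aut_comp p q) z = u * v * D / cnj D * ((D * z - (b + cnj v * a)) / D) / (M / cnj D)"
      unfolding comp aut_map_def using num den by simp
    also have "\<dots> = u * (v * (D * z - (b + cnj v * a))) / M"
      using D Dc(1) M by (simp add: field_simps)
    also have "v * (D * z - (b + cnj v * a)) = N"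
      using v unfolding N_def D_eq by (simp add: algebra_simps)
    finally show ?thesis .
  qed
  ultimately show ?thesis by simp
qed

lemma aut_comp_AutP:
  assumes p: "p \<in> AutP" and q: "q \<in> AutP"
  shows "aut_comp p q \<in> AutP"
proof -
  obtain u a where p_eq: "p = (u, a)" by (cases p)
  obtain v b where q_eq: "q = (v, b)" by (cases q)
  have uv: "cmod u = 1" "cmod v = 1" and a: "cmod (- cnj v * a) < 1" and b: "cmod b < 1"
    using p q by (auto simp: p_eq q_eq AutP_iff norm_mult)
  define D where "D = aut_comp_den p q"
  have D: "D \<noteq> 0"
    unfolding D_def using p q by (simp add: aut_comp_den_nonzero AutP_iff)
  have "1 - cnj (- cnj v * a) * b = cnj D"
    by (simp add: D_def aut_comp_den_def p_eq q_eq)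
  then have "cmod (b + cnj v * a) < cmod D"
    using norm_diff_less_norm_one_minus_cnj_mult[OF a b] by simp
  moreover have "aut_comp p q = (u * v * D / cnj D, (b + cnj v * a) / D)"
    by (simp add: aut_comp_def D_def p_eq q_eq)
  ultimately show ?thesis
    using uv D by (simp add: AutP_iff norm_mult norm_divide divide_less_eq_1)
qed

lemma aut_map_inj:
  assumes p: "p \<in> AutP" and q: "q \<in> AutP" and eq: "\<And>z. cmod z < 1 \<Longrightarrow> aut_map p z = aut_map q z"
  shows "p = q"
proof -
  obtain u a where p_eq: "p = (u, a)" by (cases p)
  obtain v b where q_eq: "q = (v, b)" by (cases q)
  have a: "cmod a < 1" and v: "cmod v = 1" and b: "cmod b < 1"
    using p q by (auto simp: p_eq q_eq AutP_iff)
  have "v * (a - b) / (1 - cnj b * a) = 0"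
    using eq[OF a] by (simp add: aut_map_def p_eq q_eq)
  then have ab: "a = b"
    using one_minus_cnj_mult_nonzero[OF b a] v by auto
  define z :: complex where "z = (if a = 0 then 1/2 else 0)"
  have z: "cmod z < 1" "z - a \<noteq> 0"
    unfolding z_def by auto
  have "u * (z - a) / (1 - cnj a * z) = v * (z - a) / (1 - cnj a * z)"
    using eq[OF z(1)] by (simp add: aut_map_def p_eq q_eq ab)
  then have "u = v"
    using one_minus_cnj_mult_nonzero[OF a z(1)] z(2) by simp
  then show ?thesis
    by (simp add: p_eq q_eq ab)
qed

lemma aut_comp_assoc:
  assumes "p \<in> AutP" "q \<in> AutP" "r \<in> AutP"
  shows "aut_comp (aut_comp p q) r = aut_comp p (aut_comp q r)"
  using assms by (intro aut_map_inj) (simp_all add: aut_comp_AutP aut_map_aut_comp aut_map_in_disc)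

lemma aut_comp_id_right [simp]: "aut_comp p (1, 0) = p"
  by (simp add: aut_comp_def aut_comp_den_def)

lemma aut_comp_id_left [simp]: "aut_comp (1, 0) p = p"
  by (simp add: aut_comp_def aut_comp_den_def)

lemma aut_inv_AutP: "p \<in> AutP \<Longrightarrow> aut_inv p \<in> AutP"
  by (simp add: aut_inv_def AutP_iff norm_mult)

lemma aut_comp_inv_right:
  assumes p: "p \<in> AutP"
  shows "aut_comp p (aut_inv p) = (1, 0)"
proof -
  have "fst p * cnj (fst p) = 1"
    using p by (simp add: AutP_iff norm_eq_1_mult_cnj)
  moreover have "cnj (aut_comp_den p (aut_inv p)) = aut_comp_den p (aut_inv p)"
    by (simp add: aut_comp_den_def aut_inv_def mult_ac)
  moreover have "aut_comp_den p (aut_inv p) \<noteq> 0"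
    using p by (intro aut_comp_den_nonzero aut_inv_AutP) (simp_all add: AutP_iff)
  ultimately show ?thesis
    by (simp add: aut_comp_def aut_inv_def)
qed

lemma aut_comp_inv_left:
  assumes p: "p \<in> AutP"
  shows "aut_comp (aut_inv p) p = (1, 0)"
proof -
  have u: "cnj (fst p) * fst p = 1"
    using p by (simp add: AutP_iff norm_eq_1_mult_cnj mult.commute)
  moreover have "cnj (aut_comp_den (aut_inv p) p) = aut_comp_den (aut_inv p) p"
    by (simp add: aut_comp_den_def aut_inv_def mult_ac)
  moreover have "aut_comp_den (aut_inv p) p \<noteq> 0"
    using p by (intro aut_comp_den_nonzero) (simp_all add: AutP_iff aut_inv_def norm_mult)
  moreover have "snd p - cnj (fst p) * fst p * snd p = 0"
    using u by simp
  ultimately show ?thesis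
    by (simp add: aut_comp_def aut_inv_def mult.assoc[symmetric])
qed

lemma mem_disc_iff: "z \<in> disc \<longleftrightarrow> cmod z < 1"
  by (simp add: disc_def)

lemma autf_eq_restrict: "autf q = restrict (aut_map q) disc"
  unfolding autf_def aut_map_def ..

lemma THE_AutP_eq:
  assumes r: "r \<in> AutP" and F: "\<And>z. cmod z < 1 \<Longrightarrow> F z = aut_map r z"
  shows "(THE q. q \<in> AutP \<and> autf q = restrict F disc) = r"
proof (rule the_equality)
  show "r \<in> AutP \<and> autf r = restrict F disc"
    using r F by (auto simp: autf_eq_restrict mem_disc_iff intro: restrict_ext)
next
  fix q assume q: "q \<in> AutP \<and> autf q = restrict F disc"
  show "q = r"
  proof (rule aut_map_inj)
    fix z :: complex assume "cmod z < 1"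
    then show "aut_map q z = aut_map r z"
      using fun_cong[OF conjunct2[OF q], of z] F by (simp add: autf_eq_restrict mem_disc_iff)
  qed (use q r in auto)
qed

lemma minus_id_AutP: "(-1, 0) \<in> AutP"
  by (simp add: AutP_iff)

lemma aut_map_minus_id [simp]: "aut_map (-1, 0) z = - z"
  by (simp add: aut_map_def)

lemma act_0_eq:
  assumes "p \<in> AutP"
  shows "act_0 p = aut_comp p (-1, 0)"
  unfolding act_0_def using assms minus_id_AutP aut_map_aut_comp[OF assms minus_id_AutP]
  by (intro THE_AutP_eq) (simp_all add: aut_comp_AutP autf_eq_restrict mem_disc_iff)

lemma act_c_eq:
  assumes "0 < c" "c < 1" "p \<in> AutP"
  shows "act_c c p = aut_comp p (-1, complex_of_real c)"
proof -
  have c: "(-1, complex_of_real c) \<in> AutP"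
    using assms by (simp add: AutP_iff)
  have phic: "phic c z = aut_map (-1, complex_of_real c) z" for z
    by (simp add: phic_def aut_map_def)
  show ?thesis
    unfolding act_c_def using assms(3) c aut_map_in_disc[OF c]
    by (intro THE_AutP_eq) (simp_all add: aut_comp_AutP aut_map_aut_comp autf_eq_restrict mem_disc_iff phic)
qed

lemma act_0_AutP: "p \<in> AutP \<Longrightarrow> act_0 p \<in> AutP"
  by (simp add: act_0_eq aut_comp_AutP minus_id_AutP)

lemma act_0_act_0:
  assumes "p \<in> AutP"
  shows "act_0 (act_0 p) = p"
proof -
  have "aut_comp (-1, 0) (-1, 0) = (1, 0)"
    by (simp add: aut_comp_def aut_comp_den_def)
  then show ?thesis
    using assms by (simp add: act_0_eq act_0_AutP aut_comp_assoc aut_comp_AutP minus_id_AutP)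
qed

lemma aut_map_act_0: "p \<in> AutP \<Longrightarrow> cmod z < 1 \<Longrightarrow> aut_map (act_0 p) z = aut_map p (- z)"
  by (simp add: act_0_eq aut_map_aut_comp minus_id_AutP)

lemma smooth_cpair_aut_comp:
  assumes P: "smooth_cpair U P" and Q: "smooth_cpair U Q"
    and den: "\<forall>x\<in>U. aut_comp_den (P x) (Q x) \<noteq> 0"
  shows "smooth_cpair U (\<lambda>x. aut_comp (P x) (Q x))"
proof -
  have D: "(\<lambda>x. aut_comp_den (P x) (Q x)) \<in> smooth_cfun U"
    using P Q unfolding smooth_cpair_def aut_comp_den_def
    by (intro smooth_cfun.add smooth_cfun.const smooth_cfun.mult smooth_cfun.cnj) auto
  then show ?thesis
    using P Q den unfolding smooth_cpair_def aut_comp_def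
    by (auto intro!: smooth_cfun_divide smooth_cfun.mult smooth_cfun.cnj smooth_cfun.add)
qed

lemma smooth_cfun_aut_map:
  assumes "\<forall>p\<in>U. 1 - cnj (snd p) * z \<noteq> 0"
  shows "(\<lambda>p. aut_map p z) \<in> smooth_cfun U"
  unfolding aut_map_def using assms
  by (intro smooth_cfun_divide smooth_cfun.mult smooth_cfun_diff smooth_cfun.cnj smooth_cfun_fst
      smooth_cfun_snd smooth_cfun.const)

lemma open_snd_in_disc: "open {p :: complex \<times> complex. cmod (snd p) < 1}"
  by (intro open_Collect_less continuous_intros)

lemma AutP_subset_snd_in_disc: "AutP \<subseteq> {p. cmod (snd p) < 1}"
  by (auto simp: AutP_iff)

lemma smooth_map_aut_comp_right:
  assumes q: "q \<in> AutP"
  shows "smooth_map AutP AutP (\<lambda>p. aut_comp p q)"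
proof -
  have "smooth_on {p. cmod (snd p) < 1} (\<lambda>p. aut_comp p q)"
    using q by (intro smooth_on_smooth_cpair open_snd_in_disc smooth_cpair_aut_comp smooth_cpair_id
      smooth_cpair_const ballI aut_comp_den_nonzero) auto
  then show ?thesis
    unfolding smooth_map_def using q open_snd_in_disc AutP_subset_snd_in_disc
    by (blast intro: aut_comp_AutP)
qed

section \<open>Conjugacy of the two involutions\<close>

text \<open>The root in (0,1) of c t^2 - 2 t + c = 0; then pseudo_dist t (-t) = 2 t / (1 + t^2) = c.\<close>

definition half_point :: "real \<Rightarrow> real" where
  "half_point c = (1 - sqrt (1 - c\<^sup>2)) / c"

lemma half_point:
  assumes c: "0 < c" "c < 1"
  shows "0 < half_point c" "half_point c < 1" "c * (1 + (half_point c)\<^sup>2) = 2 * half_point c"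
proof -
  define s where "s = sqrt (1 - c\<^sup>2)"
  have c2: "c\<^sup>2 < 1"
    using c by (simp add: abs_square_less_1)
  have s: "0 < s" "s\<^sup>2 = 1 - c\<^sup>2"
    using c2 by (simp_all add: s_def)
  then have "s < 1"
    using c by (simp add: power2_less_imp_less abs_square_less_1[symmetric])
  have "c\<^sup>2 - (1 - s)\<^sup>2 = 2 * s * (1 - s)"
    using s by (simp add: power2_eq_square algebra_simps)
  then have "(1 - s)\<^sup>2 < c\<^sup>2"
    using s \<open>s < 1\<close> by (smt (verit) mult_pos_pos)
  then have "1 - s < c"
    using c by (simp add: power_less_imp_less_base)
  have t: "half_point c = (1 - s) / c"
    by (simp add: half_point_def s_def)
  show "0 < half_point c" "half_point c < 1"
    unfolding t using c \<open>s < 1\<close> \<open>1 - s < c\<close> by simp_all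
  have "c * (1 + ((1 - s) / c)\<^sup>2) = (c\<^sup>2 + (1 - s)\<^sup>2) / c"
    using c by (simp add: field_simps power2_eq_square)
  also have "c\<^sup>2 + (1 - s)\<^sup>2 = 2 * (1 - s)"
    using s by (simp add: power2_eq_square algebra_simps)
  finally show "c * (1 + (half_point c)\<^sup>2) = 2 * half_point c"
    unfolding t by simp
qed

lemma aut_comp_conj_involutions:
  assumes "0 < c" "c < 1"
  defines "t \<equiv> complex_of_real (half_point c)"
  shows "aut_comp (-1, complex_of_real c) (1, - t) = aut_comp (1, - t) (-1, 0)"
proof -
  note h = half_point[OF assms(1,2)]
  have ct: "c * half_point c < 1"
    using mult_strict_mono[of c 1 "half_point c" 1] assms h by simp
  have "(c - half_point c) / (1 - c * half_point c) = half_point c"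
    using ct h(3) by (simp add: field_simps power2_eq_square)
  then have "(complex_of_real c - t) / (1 - complex_of_real c * t) = t"
    unfolding t_def by (metis of_real_1 of_real_diff of_real_divide of_real_mult)
  moreover have "1 - complex_of_real c * t \<noteq> 0"
    using ct unfolding t_def
    by (metis of_real_1 of_real_diff of_real_eq_0_iff of_real_mult less_irrefl right_minus_eq)
  then have "(complex_of_real c * t - 1) / (1 - complex_of_real c * t) = -1"
    by (simp add: field_simps)
  moreover have "cnj t = t"
    by (simp add: t_def)
  ultimately show ?thesis
    by (simp add: aut_comp_def aut_comp_den_def)
qed

theorem diffeo_quot_quot_act_c_act_0:
  assumes c: "0 < c" "c < 1"
  shows "diffeo_quot_quot AutP (act_c c) AutP act_0"
proof -
  define q where "q = (1 :: complex, - complex_of_real (half_point c))"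
  have q: "q \<in> AutP" "aut_inv q \<in> AutP"
    using half_point[OF c] by (simp_all add: q_def AutP_iff aut_inv_def)
  have m: "(-1, complex_of_real c) \<in> AutP"
    using c by (simp add: AutP_iff)
  show ?thesis
  proof (rule diffeo_quot_quot_intertwining)
    show "\<forall>p\<in>AutP. act_c c p \<in> AutP"
      using c m by (simp add: act_c_eq aut_comp_AutP)
    show "smooth_map AutP AutP (\<lambda>p. aut_comp p q)" "smooth_map AutP AutP (\<lambda>p. aut_comp p (aut_inv q))"
      using q by (simp_all add: smooth_map_aut_comp_right)
    show "\<forall>p\<in>AutP. aut_comp (aut_comp p q) (aut_inv q) = p"
      using q by (simp add: aut_comp_assoc aut_comp_inv_right)
    show "\<forall>p\<in>AutP. aut_comp (aut_comp p (aut_inv q)) q = p"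
      using q by (simp add: aut_comp_assoc aut_comp_inv_left)
    show "\<forall>p\<in>AutP. aut_comp (act_c c p) q = act_0 (aut_comp p q)"
      using c q m minus_id_AutP aut_comp_conj_involutions[OF c]
      by (simp add: act_c_eq act_0_eq aut_comp_AutP aut_comp_assoc q_def)
  qed
qed

section \<open>The map from Aut(D) onto L_c\<close>

definition pseudo_dist :: "complex \<Rightarrow> complex \<Rightarrow> real" where
  "pseudo_dist z w = cmod ((z - w) / (1 - cnj z * w))"

definition sym_pair :: "complex \<Rightarrow> complex \<Rightarrow> complex \<times> complex" where
  "sym_pair z w = (z + w, z * w)"

lemma Lset_eq: "Lset c = {sym_pair z1 z2 | z1 z2. cmod z1 < 1 \<and> cmod z2 < 1 \<and> pseudo_dist z1 z2 = c}"
  by (simp add: Lset_def sym_pair_def pseudo_dist_def mem_disc_iff)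

lemma sym_pair_commute: "sym_pair w z = sym_pair z w"
  by (simp add: sym_pair_def add.commute mult.commute)

lemma sym_pair_eq_imp:
  assumes "sym_pair z1 z2 = sym_pair w1 w2"
  shows "(z1 = w1 \<and> z2 = w2) \<or> (z1 = w2 \<and> z2 = w1)"
proof -
  have sum: "z1 + z2 = w1 + w2" and prod: "z1 * z2 = w1 * w2"
    using assms by (simp_all add: sym_pair_def)
  have "(z1 - w1) * (z1 - w2) = z1 * z1 - z1 * (w1 + w2) + w1 * w2"
    by (simp add: algebra_simps)
  also have "\<dots> = 0"
    unfolding sum[symmetric] prod[symmetric] by (simp add: algebra_simps)
  finally show ?thesis
    using sum by auto
qed

lemma pseudo_dist_commute: "pseudo_dist w z = pseudo_dist z w"
proof -
  have "1 - cnj w * z = cnj (1 - cnj z * w)"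
    by (simp add: mult.commute)
  then have "cmod (1 - cnj w * z) = cmod (1 - cnj z * w)"
    by (metis complex_mod_cnj)
  then show ?thesis
    by (simp add: pseudo_dist_def norm_divide norm_minus_commute)
qed

lemma pseudo_dist_aut_map:
  assumes p: "p \<in> AutP" and x: "cmod x < 1" and y: "cmod y < 1"
  shows "pseudo_dist (aut_map p x) (aut_map p y) = pseudo_dist x y"
proof -
  obtain u a where p_eq: "p = (u, a)" by (cases p)
  have a: "cmod a < 1" and u: "cmod u = 1" "cnj u * u = 1"
    using p by (auto simp: p_eq AutP_iff norm_eq_1_mult_cnj mult.commute)
  define dx where "dx = 1 - cnj a * x"
  define dy where "dy = 1 - cnj a * y"
  define A where "A = 1 - a * cnj a"
  have dx: "dx \<noteq> 0" and dy: "dy \<noteq> 0" and dxy: "1 - cnj x * y \<noteq> 0"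
    using one_minus_cnj_mult_nonzero[OF a x] one_minus_cnj_mult_nonzero[OF a y]
      one_minus_cnj_mult_nonzero[OF x y] by (simp_all add: dx_def dy_def)
  have "(cmod a)\<^sup>2 < 1"
    using a by (simp add: abs_square_less_1)
  moreover have "A = complex_of_real (1 - (cmod a)\<^sup>2)"
    unfolding A_def using complex_norm_square[of a] by simp
  ultimately have A: "A \<noteq> 0"
    by (simp only: of_real_eq_0_iff)
  have mx: "aut_map p x = u * (x - a) / dx" and my: "aut_map p y = u * (y - a) / dy"
    by (simp_all add: aut_map_def p_eq dx_def dy_def)
  have num: "aut_map p x - aut_map p y = u * (x - y) * A / (dx * dy)"
    unfolding mx my using dx dy by (simp add: field_simps; simp add: A_def dx_def dy_def algebra_simps)
  have "cnj (aut_map p x) * aut_map p y = (cnj u * u) * (cnj x - cnj a) * (y - a) / (cnj dx * dy)"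
    unfolding mx my by (simp add: field_simps)
  also have "cnj dx * dy - (cnj x - cnj a) * (y - a) = A * (1 - cnj x * y)"
    unfolding dx_def dy_def A_def by (simp add: algebra_simps)
  then have "(cnj u * u) * (cnj x - cnj a) * (y - a) / (cnj dx * dy)
      = 1 - A * (1 - cnj x * y) / (cnj dx * dy)"
    using dx dy u(2) by (simp add: field_simps)
  finally have den: "1 - cnj (aut_map p x) * aut_map p y = A * (1 - cnj x * y) / (cnj dx * dy)"
    by simp
  have "(aut_map p x - aut_map p y) / (1 - cnj (aut_map p x) * aut_map p y)
      = u * (x - y) * cnj dx / (dx * (1 - cnj x * y))"
    unfolding num den using dx dy A dxy by (simp add: field_simps)
  then have "pseudo_dist (aut_map p x) (aut_map p y)
      = cmod (x - y) * cmod dx / (cmod dx * cmod (1 - cnj x * y))"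
    using u by (simp add: pseudo_dist_def norm_mult norm_divide)
  also have "\<dots> = pseudo_dist x y"
    using dx by (simp add: pseudo_dist_def norm_divide)
  finally show ?thesis .
qed

lemma pseudo_dist_half_point:
  assumes "0 < c" "c < 1"
  defines "t \<equiv> complex_of_real (half_point c)"
  shows "pseudo_dist t (- t) = c"
proof -
  note h = half_point[OF assms(1,2)]
  have "(t - - t) / (1 - cnj t * - t) = complex_of_real (2 * half_point c / (1 + (half_point c)\<^sup>2))"
    by (simp add: t_def power2_eq_square)
  also have "2 * half_point c / (1 + (half_point c)\<^sup>2) = c * (1 + (half_point c)\<^sup>2) / (1 + (half_point c)\<^sup>2)"
    using h(3) by simp
  also have "\<dots> = c"
    by (metis add_pos_nonneg less_irrefl nonzero_mult_div_cancel_right zero_le_power2 zero_less_one)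
  finally show ?thesis
    using assms(1) by (simp add: pseudo_dist_def)
qed

lemma aut_fixing_opposite_points_eq_id:
  fixes t :: real
  assumes x: "x \<in> AutP" and t: "0 < t" "t < 1"
    and fixed: "aut_map x t = t" "aut_map x (- t) = - t"
  shows "x = (1, 0)"
proof -
  obtain v b where x_eq: "x = (v, b)" by (cases x)
  have b: "cmod b < 1"
    using x by (simp add: x_eq AutP_iff)
  have d1: "1 - cnj b * t \<noteq> 0" and d2: "1 - cnj b * (- t) \<noteq> 0"
    using t one_minus_cnj_mult_nonzero[OF b, of t] one_minus_cnj_mult_nonzero[OF b, of "- t"] by simp_all
  have e1: "v * (t - b) = t * (1 - cnj b * t)"
    using fixed(1) d1 unfolding aut_map_def x_eq by (simp add: field_simps)
  have e2: "v * (- t - b) = - t * (1 - cnj b * (- t))"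
    using fixed(2) d2 unfolding aut_map_def x_eq by (simp add: field_simps)
  have "2 * t * v = v * (t - b) - v * (- t - b)"
    by (simp add: algebra_simps)
  also have "\<dots> = 2 * t"
    unfolding e1 e2 by (simp add: algebra_simps)
  finally have v: "v = 1"
    using t by simp
  have "2 * b = - (v * (t - b) + v * (- t - b))"
    unfolding v by (simp add: algebra_simps)
  also have "\<dots> = 2 * (cnj b * complex_of_real (t * t))"
    unfolding e1 e2 by (simp add: algebra_simps)
  finally have "cmod b = cmod (cnj b * complex_of_real (t * t))"
    by simp
  also have "\<dots> = cmod b * (t * t)"
    by (simp add: norm_mult)
  finally have "cmod b = cmod b * (t * t)" .
  moreover have "t * t < 1"
    using t mult_strict_mono[of t 1 t 1] by simp
  ultimately have "b = 0"
    using mult_strict_left_mono[of "t * t" 1 "cmod b"] by (cases "b = 0") auto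
  then show ?thesis
    by (simp add: x_eq v)
qed

lemma aut_eq_if_agree_on_opposite_points:
  fixes t :: real
  assumes p: "p \<in> AutP" and q: "q \<in> AutP" and t: "0 < t" "t < 1"
    and agree: "aut_map p t = aut_map q t" "aut_map p (- t) = aut_map q (- t)"
  shows "p = q"
proof -
  define x where "x = aut_comp (aut_inv q) p"
  have x: "x \<in> AutP"
    unfolding x_def using p q by (simp add: aut_comp_AutP aut_inv_AutP)
  have inv: "aut_map (aut_inv q) (aut_map q z) = z" if "cmod z < 1" for z
    using aut_map_aut_comp[OF aut_inv_AutP[OF q] q that] by (simp add: aut_comp_inv_left[OF q] aut_map_def)
  have "aut_map x z = aut_map (aut_inv q) (aut_map p z)" if "cmod z < 1" for z
    unfolding x_def using p q that by (simp add: aut_map_aut_comp aut_inv_AutP)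
  then have "x = (1, 0)"
    using t agree inv by (intro aut_fixing_opposite_points_eq_id[OF x t]) auto
  then have "aut_comp q x = q"
    by simp
  moreover have "aut_comp q x = p"
    unfolding x_def using p q by (simp add: aut_comp_assoc[symmetric] aut_comp_inv_right aut_inv_AutP)
  ultimately show ?thesis
    by simp
qed

definition pair_map :: "real \<Rightarrow> complex \<times> complex \<Rightarrow> complex \<times> complex" where
  "pair_map c p =
     sym_pair (aut_map p (complex_of_real (half_point c))) (aut_map p (- complex_of_real (half_point c)))"

lemma pair_map_act_0:
  assumes "0 < c" "c < 1" "p \<in> AutP"
  shows "pair_map c (act_0 p) = pair_map c p"
  using assms half_point[OF assms(1,2)] by (simp add: pair_map_def aut_map_act_0 sym_pair_commute)

lemma pair_map_in_Lset:
  assumes c: "0 < c" "c < 1" and p: "p \<in> AutP"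
  shows "pair_map c p \<in> Lset c"
proof -
  define t where "t = complex_of_real (half_point c)"
  have t: "cmod t < 1" "cmod (- t) < 1"
    using half_point[OF c] by (simp_all add: t_def)
  have "pseudo_dist (aut_map p t) (aut_map p (- t)) = c"
    using pseudo_dist_aut_map[OF p t] pseudo_dist_half_point[OF c] by (simp add: t_def)
  then show ?thesis
    unfolding Lset_eq pair_map_def t_def[symmetric] using aut_map_in_disc[OF p] t by blast
qed

lemma pair_map_eq_imp:
  assumes c: "0 < c" "c < 1" and p: "p \<in> AutP" and q: "q \<in> AutP"
    and eq: "pair_map c p = pair_map c q"
  shows "q = p \<or> q = act_0 p"
proof -
  define t where "t = complex_of_real (half_point c)"
  note h = half_point[OF c]
  have t: "cmod t < 1" "cmod (- t) < 1"
    using h by (simp_all add: t_def)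
  from eq consider "aut_map p t = aut_map q t" "aut_map p (- t) = aut_map q (- t)"
    | "aut_map p t = aut_map (act_0 q) t" "aut_map p (- t) = aut_map (act_0 q) (- t)"
    using sym_pair_eq_imp aut_map_act_0[OF q t(1)] aut_map_act_0[OF q t(2)]
    unfolding pair_map_def t_def[symmetric] by fastforce
  then show ?thesis
  proof cases
    case 1
    then show ?thesis
      using aut_eq_if_agree_on_opposite_points[OF p q h(1,2)] by (simp add: t_def)
  next
    case 2
    then have "p = act_0 q"
      using aut_eq_if_agree_on_opposite_points[OF p act_0_AutP[OF q] h(1,2)] by (simp add: t_def)
    then show ?thesis
      using act_0_act_0[OF q] by simp
  qed
qed

lemma norm_rotation_of_pseudo_dist:
  assumes "0 < c" "pseudo_dist z1 z2 = c"
  shows "cmod ((z1 - z2) / (complex_of_real c * (1 - cnj z1 * z2))) = 1"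
proof -
  have "cmod ((z1 - z2) / (complex_of_real c * (1 - cnj z1 * z2))) = pseudo_dist z1 z2 / c"
    using assms(1) by (simp add: pseudo_dist_def norm_mult norm_divide)
  then show ?thesis
    using assms by simp
qed

lemma aut_map_minus_half_point:
  assumes "0 < c" "c < 1"
  defines "t \<equiv> complex_of_real (half_point c)"
  shows "aut_map (w, t) (- t) = - complex_of_real c * w"
proof -
  note h = half_point[OF assms(1,2)]
  have tt: "1 + t * t = complex_of_real (1 + (half_point c)\<^sup>2)"
    by (simp add: t_def power2_eq_square)
  then have "1 + t * t \<noteq> 0"
    by (metis of_real_eq_0_iff add_pos_nonneg zero_le_power2 zero_less_one less_irrefl)
  moreover have "complex_of_real c * (1 + t * t) = complex_of_real (c * (1 + (half_point c)\<^sup>2))"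
    by (simp add: tt)
  then have "2 * t = complex_of_real c * (1 + t * t)"
    using h(3) by (simp add: t_def)
  ultimately show ?thesis
    by (simp add: aut_map_def t_def field_simps)
qed

lemma aut_map_inverse_translation:
  assumes "cmod a < 1" "1 - cnj a * z \<noteq> 0"
  shows "aut_map (1, - a) ((z - a) / (1 - cnj a * z)) = z"
proof -
  have "1 - cnj a * a \<noteq> 0"
    using assms(1) assms(1) by (rule one_minus_cnj_mult_nonzero)
  moreover have "(z - a) / (1 - cnj a * z) + a = z * (1 - cnj a * a) / (1 - cnj a * z)"
    "1 + cnj a * ((z - a) / (1 - cnj a * z)) = (1 - cnj a * a) / (1 - cnj a * z)"
    using assms(2) by (simp_all add: field_simps; simp add: algebra_simps)+
  ultimately show ?thesis
    using assms(2) by (simp add: aut_map_def)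
qed

text \<open>The automorphism aut_map (1, - z1) o aut_map (w, t): the second factor sends t to 0 and -t
  to - c w, the first sends 0 to z1, and the unimodular w is chosen so that it sends - c w to z2.\<close>

definition pair_lift :: "real \<Rightarrow> complex \<Rightarrow> complex \<Rightarrow> complex \<times> complex" where
  "pair_lift c z1 z2 =
     aut_comp (1, - z1)
       ((z1 - z2) / (complex_of_real c * (1 - cnj z1 * z2)), complex_of_real (half_point c))"

lemma pair_lift:
  assumes c: "0 < c" "c < 1" and z1: "cmod z1 < 1" and z2: "cmod z2 < 1"
    and dist: "pseudo_dist z1 z2 = c"
  shows "pair_lift c z1 z2 \<in> AutP" "pair_map c (pair_lift c z1 z2) = sym_pair z1 z2"
proof -
  define t where "t = complex_of_real (half_point c)"
  define d where "d = 1 - cnj z1 * z2"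
  define w where "w = (z1 - z2) / (complex_of_real c * d)"
  have t: "cmod t < 1" "cmod (- t) < 1"
    using half_point[OF c] by (simp_all add: t_def)
  have d: "d \<noteq> 0"
    unfolding d_def using z1 z2 by (rule one_minus_cnj_mult_nonzero)
  have "cmod w = 1"
    unfolding w_def d_def using c(1) dist by (rule norm_rotation_of_pseudo_dist)
  then have A: "(1, - z1) \<in> AutP" "(w, t) \<in> AutP"
    using z1 t by (simp_all add: AutP_iff)
  have lift: "pair_lift c z1 z2 = aut_comp (1, - z1) (w, t)"
    by (simp add: pair_lift_def w_def d_def t_def)
  show "pair_lift c z1 z2 \<in> AutP"
    unfolding lift using A by (rule aut_comp_AutP)
  have "aut_map (pair_lift c z1 z2) t = z1"
    unfolding lift using aut_map_aut_comp[OF A t(1)] by (simp add: aut_map_def)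
  moreover have "aut_map (w, t) (- t) = - complex_of_real c * w"
    unfolding t_def by (rule aut_map_minus_half_point[OF c])
  moreover have "- complex_of_real c * w = (z2 - z1) / d"
    unfolding w_def using c d by (simp add: field_simps)
  moreover have "aut_map (1, - z1) ((z2 - z1) / d) = z2"
    unfolding d_def using z1 d[unfolded d_def] by (rule aut_map_inverse_translation)
  ultimately show "pair_map c (pair_lift c z1 z2) = sym_pair z1 z2"
    unfolding pair_map_def t_def[symmetric] using aut_map_aut_comp[OF A t(2)] by (simp add: lift)
qed

lemma local_smooth_roots:
  assumes "a1 \<noteq> a2"
  obtains B Z1 Z2 where "open B" "sym_pair a1 a2 \<in> B" "Z1 \<in> smooth_cfun B" "Z2 \<in> smooth_cfun B"
    "Z1 (sym_pair a1 a2) = a1" "Z2 (sym_pair a1 a2) = a2" "\<forall>y\<in>B. sym_pair (Z1 y) (Z2 y) = y"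
proof
  text \<open>Dividing by the square of a1 - a2 makes the discriminant equal to 1 at the base point,
    away from the branch cut of csqrt.\<close>
  define \<delta> where "\<delta> = a1 - a2"
  define discr where "discr y = (fst y * fst y - 4 * snd y) / \<delta>\<^sup>2" for y :: "complex \<times> complex"
  define B where "B = {y. 0 < Re (discr y)}"
  define S where "S y = \<delta> * csqrt (discr y)" for y
  define Z1 where "Z1 y = (fst y + S y) / 2" for y
  define Z2 where "Z2 y = (fst y - S y) / 2" for y
  have \<delta>: "\<delta> \<noteq> 0"
    using assms by (simp add: \<delta>_def)
  show "open B"
    unfolding B_def discr_def by (intro open_Collect_less continuous_intros) (use \<delta> in auto)
  have "fst (sym_pair a1 a2) * fst (sym_pair a1 a2) - 4 * snd (sym_pair a1 a2) = \<delta>\<^sup>2"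
    by (simp add: sym_pair_def \<delta>_def power2_eq_square algebra_simps)
  then have "discr (sym_pair a1 a2) = 1"
    using \<delta> by (simp add: discr_def)
  then show "sym_pair a1 a2 \<in> B" "Z1 (sym_pair a1 a2) = a1" "Z2 (sym_pair a1 a2) = a2"
    by (simp_all add: B_def Z1_def Z2_def S_def \<delta>_def sym_pair_def field_simps)
  have "discr \<in> smooth_cfun B"
    unfolding discr_def
    by (intro smooth_cfun_divide smooth_cfun_diff smooth_cfun.mult smooth_cfun_fst smooth_cfun_snd smooth_cfun.const)
      (use \<delta> in simp)
  then have "S \<in> smooth_cfun B"
    unfolding S_def by (intro smooth_cfun.mult smooth_cfun.const smooth_cfun_csqrt) (auto simp: B_def)
  then show "Z1 \<in> smooth_cfun B" "Z2 \<in> smooth_cfun B"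
    unfolding Z1_def Z2_def
    by (auto intro!: smooth_cfun_divide smooth_cfun.add smooth_cfun_diff smooth_cfun_fst smooth_cfun.const)
  have "sym_pair (Z1 y) (Z2 y) = y" for y
  proof -
    have "S y * S y = \<delta>\<^sup>2 * (csqrt (discr y))\<^sup>2"
      by (simp add: S_def power2_eq_square mult_ac)
    then have square: "S y * S y = fst y * fst y - 4 * snd y"
      using \<delta> by (simp add: discr_def)
    have "sym_pair (Z1 y) (Z2 y) = (fst y, (fst y * fst y - S y * S y) / 4)"
      by (simp add: sym_pair_def Z1_def Z2_def field_simps)
    then show ?thesis
      unfolding square by simp
  qed
  then show "\<forall>y\<in>B. sym_pair (Z1 y) (Z2 y) = y"
    by blast
qed

lemma smooth_pair_lift_near:
  assumes c: "0 < c" "c < 1" and B: "open B" "x0 \<in> B"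
    and Z: "Z1 \<in> smooth_cfun B" "Z2 \<in> smooth_cfun B"
    and Z_x0: "cmod (Z1 x0) < 1" "cmod (Z2 x0) < 1" "pseudo_dist (Z1 x0) (Z2 x0) = c"
  obtains V where "open V" "x0 \<in> V" "V \<subseteq> B" "smooth_on V (\<lambda>y. pair_lift c (Z1 y) (Z2 y))"
proof
  define t where "t = complex_of_real (half_point c)"
  define d where "d y = 1 - cnj (Z1 y) * Z2 y" for y
  define W where "W y = (Z1 y - Z2 y) / (complex_of_real c * d y)" for y
  define B1 where "B1 = {y \<in> B. d y \<noteq> 0}"
  define V where "V = {y \<in> B1. aut_comp_den (1, - Z1 y) (W y, t) \<noteq> 0}"
  have d: "d \<in> smooth_cfun B"
    unfolding d_def using Z by (intro smooth_cfun_diff smooth_cfun.const smooth_cfun.mult smooth_cfun.cnj)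
  then have B1: "open B1" "B1 \<subseteq> B"
    unfolding B1_def using B by (simp_all add: open_smooth_cfun_nonzero)
  have W: "W \<in> smooth_cfun B1"
    unfolding W_def using Z d B1(2) c
    by (intro smooth_cfun_divide smooth_cfun_diff smooth_cfun.mult smooth_cfun.const)
      (auto simp: B1_def intro: smooth_cfun_mono)
  have factors: "smooth_cpair B1 (\<lambda>y. (1, - Z1 y))" "smooth_cpair B1 (\<lambda>y. (W y, t))"
    using Z B1(2) W by (auto intro: smooth_cfun_minus smooth_cfun.const smooth_cfun_mono)
  then have "(\<lambda>y. aut_comp_den (1, - Z1 y) (W y, t)) \<in> smooth_cfun B1"
    unfolding aut_comp_den_def smooth_cpair_def
    by (intro smooth_cfun.add smooth_cfun.mult smooth_cfun.cnj smooth_cfun.const) auto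
  then show V: "open V" "V \<subseteq> B"
    unfolding V_def using B1 by (auto simp: open_smooth_cfun_nonzero)
  have "smooth_cpair V (\<lambda>y. aut_comp (1, - Z1 y) (W y, t))"
    using factors
    by (intro smooth_cpair_aut_comp) (auto simp: V_def smooth_cpair_def intro: smooth_cfun_mono)
  moreover have "pair_lift c (Z1 y) (Z2 y) = aut_comp (1, - Z1 y) (W y, t)" for y
    by (simp add: pair_lift_def W_def d_def t_def)
  ultimately show "smooth_on V (\<lambda>y. pair_lift c (Z1 y) (Z2 y))"
    using V(1) by (simp add: smooth_on_smooth_cpair)
  have "d x0 \<noteq> 0"
    using one_minus_cnj_mult_nonzero[OF Z_x0(1,2)] by (simp add: d_def)
  moreover have "(W x0, t) \<in> AutP"
    using norm_rotation_of_pseudo_dist[OF c(1) Z_x0(3)] half_point[OF c]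
    by (simp add: AutP_iff W_def d_def t_def)
  ultimately show "x0 \<in> V"
    using Z_x0 B(2) by (simp add: V_def B1_def aut_comp_den_nonzero)
qed

lemma pair_map_local_section:
  assumes c: "0 < c" "c < 1" and x0: "x0 \<in> Lset c"
  shows "\<exists>V g. open V \<and> x0 \<in> V \<and> smooth_map (Lset c \<inter> V) AutP g \<and> (\<forall>y\<in>Lset c \<inter> V. pair_map c (g y) = y)"
proof -
  obtain a1 a2 where x0_eq: "x0 = sym_pair a1 a2" and a: "cmod a1 < 1" "cmod a2 < 1"
    and dist: "pseudo_dist a1 a2 = c"
    using x0 unfolding Lset_eq by blast
  have "a1 \<noteq> a2"
    using dist c by (auto simp: pseudo_dist_def)
  then obtain B Z1 Z2 where B: "open B" "x0 \<in> B" and Z: "Z1 \<in> smooth_cfun B" "Z2 \<in> smooth_cfun B"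
    and Z_x0: "Z1 x0 = a1" "Z2 x0 = a2" and roots: "\<forall>y\<in>B. sym_pair (Z1 y) (Z2 y) = y"
    using local_smooth_roots unfolding x0_eq by metis
  obtain V where V: "open V" "x0 \<in> V" "V \<subseteq> B" and smooth: "smooth_on V (\<lambda>y. pair_lift c (Z1 y) (Z2 y))"
    using smooth_pair_lift_near[OF c B Z] a dist by (auto simp: Z_x0)
  have lifted: "pair_lift c (Z1 y) (Z2 y) \<in> AutP \<and> pair_map c (pair_lift c (Z1 y) (Z2 y)) = y"
    if y: "y \<in> Lset c \<inter> V" for y
  proof -
    obtain b1 b2 where y_eq: "y = sym_pair b1 b2" and b: "cmod b1 < 1" "cmod b2 < 1"
      and dist_b: "pseudo_dist b1 b2 = c"
      using y unfolding Lset_eq by blast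
    have roots_y: "sym_pair (Z1 y) (Z2 y) = y"
      using roots y V(3) by auto
    then have "cmod (Z1 y) < 1 \<and> cmod (Z2 y) < 1 \<and> pseudo_dist (Z1 y) (Z2 y) = c"
      using sym_pair_eq_imp b dist_b pseudo_dist_commute unfolding y_eq by metis
    then show ?thesis
      using pair_lift[OF c] roots_y by auto
  qed
  have "smooth_map (Lset c \<inter> V) AutP (\<lambda>y. pair_lift c (Z1 y) (Z2 y))"
    unfolding smooth_map_def using lifted V(1) smooth
    by (auto intro!: exI[of _ V] exI[of _ "\<lambda>y. pair_lift c (Z1 y) (Z2 y)"])
  then show ?thesis
    using V(1,2) lifted
    by (intro exI[of _ V] exI[of _ "\<lambda>y. pair_lift c (Z1 y) (Z2 y)"]) auto
qed

theorem diffeo_sub_quot_Lset_act_0: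
  assumes c: "0 < c" "c < 1"
  shows "diffeo_sub_quot (Lset c) AutP act_0"
proof (rule diffeo_sub_quot_orbit_map)
  show "\<forall>p\<in>AutP. act_0 (act_0 p) = p"
    by (simp add: act_0_act_0)
  have "smooth_on {p. cmod (snd p) < 1} (pair_map c)"
  proof -
    define t where "t = complex_of_real (half_point c)"
    have "(\<lambda>p. aut_map p z) \<in> smooth_cfun {p. cmod (snd p) < 1}" if "cmod z < 1" for z
      by (intro smooth_cfun_aut_map ballI one_minus_cnj_mult_nonzero that) simp
    moreover have "cmod t < 1" "cmod (- t) < 1"
      using half_point[OF c] by (simp_all add: t_def)
    ultimately have "(\<lambda>p. aut_map p t) \<in> smooth_cfun {p. cmod (snd p) < 1}"
      "(\<lambda>p. aut_map p (- t)) \<in> smooth_cfun {p. cmod (snd p) < 1}"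
      by blast+
    then show ?thesis
      unfolding pair_map_def sym_pair_def t_def[symmetric]
      by (intro smooth_on_smooth_cpair open_snd_in_disc) (simp add: smooth_cfun.add smooth_cfun.mult)
  qed
  then show "smooth_map AutP (Lset c) (pair_map c)"
    unfolding smooth_map_def using pair_map_in_Lset[OF c] open_snd_in_disc AutP_subset_snd_in_disc by blast
  show "\<forall>p\<in>AutP. pair_map c (act_0 p) = pair_map c p"
    using c by (simp add: pair_map_act_0)
  show "\<forall>p\<in>AutP. \<forall>q\<in>AutP. pair_map c p = pair_map c q \<longrightarrow> q = p \<or> q = act_0 p"
    using pair_map_eq_imp[OF c] by blast
  show "\<forall>x\<in>Lset c. \<exists>U g. open U \<and> x \<in> U \<and> smooth_map (Lset c \<inter> U) AutP g \<and> (\<forall>y\<in>Lset c \<inter> U. pair_map c (g y) = y)"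
    using pair_map_local_section[OF c] by blast
qed

theorem theorem2p10:
  fixes c :: real
  assumes "0 < c" and "c < 1"
  shows "diffeo_sub_quot (Lset c) AutP act_0 \<and> diffeo_quot_quot AutP (act_c c) AutP act_0"
  using diffeo_sub_quot_Lset_act_0[OF assms] diffeo_quot_quot_act_c_act_0[OF assms] ..

end
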